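(* Every countable crowded $T_1$ space of $\pi$-weight smaller than $\mathfrak{m}_c$ is selectively separable.
   Context: A space is crowded if it has no isolated points. A space $X$ is selectively separable if for every sequence $(D_n)_{n\in\omega}$ of dense subsets of $X$ there are finite $F_n\subseteq D_n$ with $\bigcup_n F_n$ dense in $X$. $\mathfrak{m}_c$ is the least cardinal $\kappa$ such that MA$(\kappa)$ for countable posets fails. *)

theory Defs
  imports "HOL-Analysis.Analysis"
begin

definition dense_in :: "'a topology \<Rightarrow> 'a set \<Rightarrow> bool" where
  "dense_in X D \<longleftrightarrow> D \<subseteq> topspace X \<and> X closure_of D = topspace X"

definition crowded :: "'a topology \<Rightarrow> bool" where
  "crowded X \<longleftrightarrow> (\<forall>x\<in>topspace X. \<not> openin X {x})"

definition selectively_separable :: "'a topology \<Rightarrow> bool" where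
  "selectively_separable X \<longleftrightarrow>
     (\<forall>D :: nat \<Rightarrow> 'a set. (\<forall>n. dense_in X (D n)) \<longrightarrow>
        (\<exists>F :: nat \<Rightarrow> 'a set. (\<forall>n. finite (F n) \<and> F n \<subseteq> D n) \<and> dense_in X (\<Union>n. F n)))"

definition pi_base :: "'a topology \<Rightarrow> 'a set set \<Rightarrow> bool" where
  "pi_base X B \<longleftrightarrow> (\<forall>U\<in>B. openin X U \<and> U \<noteq> {}) \<and>
     (\<forall>V. openin X V \<and> V \<noteq> {} \<longrightarrow> (\<exists>U\<in>B. U \<subseteq> V))"

text \<open>Countable posets: every countable poset is isomorphic to one carried by a
  subset of nat.  P is a nonempty set S with a partial order le on S.\<close>
definition ctbl_poset :: "nat set \<Rightarrow> (nat \<Rightarrow> nat \<Rightarrow> bool) \<Rightarrow> bool" where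
  "ctbl_poset S le \<longleftrightarrow> S \<noteq> {} \<and>
     (\<forall>p\<in>S. le p p) \<and>
     (\<forall>p\<in>S. \<forall>q\<in>S. le p q \<and> le q p \<longrightarrow> p = q) \<and>
     (\<forall>p\<in>S. \<forall>q\<in>S. \<forall>r\<in>S. le p q \<and> le q r \<longrightarrow> le p r)"

definition dense_poset :: "nat set \<Rightarrow> (nat \<Rightarrow> nat \<Rightarrow> bool) \<Rightarrow> nat set \<Rightarrow> bool" where
  "dense_poset S le D \<longleftrightarrow> D \<subseteq> S \<and> (\<forall>p\<in>S. \<exists>q\<in>D. le q p)"

definition filter_poset :: "nat set \<Rightarrow> (nat \<Rightarrow> nat \<Rightarrow> bool) \<Rightarrow> nat set \<Rightarrow> bool" where
  "filter_poset S le G \<longleftrightarrow> G \<subseteq> S \<and> G \<noteq> {} \<and>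
     (\<forall>p\<in>G. \<forall>q\<in>S. le p q \<longrightarrow> q \<in> G) \<and>
     (\<forall>p\<in>G. \<forall>q\<in>G. \<exists>r\<in>G. le r p \<and> le r q)"

definition MA_countable :: "'i set \<Rightarrow> bool" where
  "MA_countable I \<longleftrightarrow>
     (\<forall>S le (D :: 'i \<Rightarrow> nat set). ctbl_poset S le \<and> (\<forall>i\<in>I. dense_poset S le (D i)) \<longrightarrow>
        (\<exists>G. filter_poset S le G \<and> (\<forall>i\<in>I. G \<inter> D i \<noteq> {})))"

text \<open>|A| < m_c, where m_c is the least cardinal kappa for which MA(kappa) for countable
  posets fails: i.e. MA(kappa) holds for every cardinal kappa \<le> |A|, and the cardinals
  \<le> |A| are exactly the |B| with B \<subseteq> A.\<close>
definition card_less_mc :: "'i set \<Rightarrow> bool" where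
  "card_less_mc A \<longleftrightarrow> (\<forall>B. B \<subseteq> A \<longrightarrow> MA_countable B)"

text \<open>pi-weight(X) < m_c: since pi-weight is the least size of a pi-base.\<close>
definition piweight_less_mc :: "'a topology \<Rightarrow> bool" where
  "piweight_less_mc X \<longleftrightarrow> (\<exists>B. pi_base X B \<and> card_less_mc B)"

end

theory Submission
  imports Defs "HOL-Library.Sublist"
begin

text \<open>Conditions are finite sequences \<open>(F\<^sub>0, \<dots>, F\<^sub>k)\<close> of finite sets with
  \<open>F\<^sub>i \<subseteq> D\<^sub>i\<close>, ordered by extension; since the space is countable there are only countably many.
  For each member \<open>U\<close> of the \<pi>-base, the conditions with some \<open>F\<^sub>i\<close> meeting \<open>U\<close> are dense,
  because the next set \<open>D\<^sub>k\<^sub>+\<^sub>1\<close> meets \<open>U\<close>. A filter meeting these fewer than \<open>m\<^sub>c\<close> dense sets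
  is a family of mutually compatible sequences; their union selects finite \<open>F\<^sub>n \<subseteq> D\<^sub>n\<close>, and
  \<open>\<Union>F\<^sub>n\<close> meets every member of the \<pi>-base, hence is dense.\<close>

lemma ctbl_poset_to_nat_on:
  assumes "countable P" and "P \<noteq> {}"
    and refl: "\<forall>p\<in>P. le p p"
    and antisym: "\<forall>p\<in>P. \<forall>q\<in>P. le p q \<and> le q p \<longrightarrow> p = q"
    and trans: "\<forall>p\<in>P. \<forall>q\<in>P. \<forall>r\<in>P. le p q \<and> le q r \<longrightarrow> le p r"
  shows "ctbl_poset (to_nat_on P ` P) (\<lambda>a b. le (from_nat_into P a) (from_nat_into P b))"
  unfolding ctbl_poset_def
proof (intro conjI ballI impI)
  show "to_nat_on P ` P \<noteq> {}"
    using assms(2) by simp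
next
  fix a assume "a \<in> to_nat_on P ` P"
  then show "le (from_nat_into P a) (from_nat_into P a)"
    using assms(1) refl by auto
next
  fix a b assume "a \<in> to_nat_on P ` P" "b \<in> to_nat_on P ` P"
    "le (from_nat_into P a) (from_nat_into P b) \<and> le (from_nat_into P b) (from_nat_into P a)"
  then show "a = b"
    using assms(1) antisym by (metis imageE from_nat_into_to_nat_on)
next
  fix a b c assume "a \<in> to_nat_on P ` P" "b \<in> to_nat_on P ` P" "c \<in> to_nat_on P ` P"
    "le (from_nat_into P a) (from_nat_into P b) \<and> le (from_nat_into P b) (from_nat_into P c)"
  then show "le (from_nat_into P a) (from_nat_into P c)"
    using assms(1) trans by (metis imageE from_nat_into_to_nat_on)
qed

lemma dense_poset_to_nat_on:
  assumes "countable P" and "E \<subseteq> P" and "\<forall>p\<in>P. \<exists>q\<in>E. le q p"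
  shows "dense_poset (to_nat_on P ` P) (\<lambda>a b. le (from_nat_into P a) (from_nat_into P b))
    (to_nat_on P ` E)"
proof -
  have "\<exists>b\<in>to_nat_on P ` E. le (from_nat_into P b) (from_nat_into P (to_nat_on P p))"
    if "p \<in> P" for p
  proof -
    obtain q where "q \<in> E" "le q p"
      using assms(3) \<open>p \<in> P\<close> by blast
    moreover have "q \<in> P"
      using \<open>q \<in> E\<close> assms(2) by blast
    ultimately show ?thesis
      using assms(1) \<open>p \<in> P\<close> by (intro bexI[of _ "to_nat_on P q"]) auto
  qed
  then show ?thesis
    unfolding dense_poset_def using assms(2) by blast
qed

lemma MA_countable_directed_meets_dense:
  fixes le :: "'b \<Rightarrow> 'b \<Rightarrow> bool" and E :: "'i \<Rightarrow> 'b set"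
  assumes "MA_countable I" and "countable P" and "P \<noteq> {}"
    and "\<forall>p\<in>P. le p p"
    and "\<forall>p\<in>P. \<forall>q\<in>P. le p q \<and> le q p \<longrightarrow> p = q"
    and "\<forall>p\<in>P. \<forall>q\<in>P. \<forall>r\<in>P. le p q \<and> le q r \<longrightarrow> le p r"
    and dense: "\<forall>i\<in>I. E i \<subseteq> P \<and> (\<forall>p\<in>P. \<exists>q\<in>E i. le q p)"
  shows "\<exists>G \<subseteq> P. G \<noteq> {} \<and> (\<forall>p\<in>G. \<forall>q\<in>G. \<exists>r\<in>G. le r p \<and> le r q) \<and> (\<forall>i\<in>I. G \<inter> E i \<noteq> {})"
proof -
  let ?f = "to_nat_on P" and ?g = "from_nat_into P"
  let ?le = "\<lambda>a b. le (?g a) (?g b)"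
  have "ctbl_poset (?f ` P) ?le"
    using ctbl_poset_to_nat_on[OF assms(2-6)] .
  moreover have "dense_poset (?f ` P) ?le (?f ` E i)" if "i \<in> I" for i
    using dense that by (intro dense_poset_to_nat_on[OF assms(2)]) auto
  ultimately obtain G where G: "filter_poset (?f ` P) ?le G"
    and meets: "\<forall>i\<in>I. G \<inter> ?f ` E i \<noteq> {}"
    using assms(1)[unfolded MA_countable_def, rule_format, of "?f ` P" ?le "\<lambda>i. ?f ` E i"]
    by auto
  have "G \<subseteq> ?f ` P"
    using G unfolding filter_poset_def by blast
  then have "?g ` G \<subseteq> P" "?g ` G \<noteq> {}"
    using G assms(2) unfolding filter_poset_def by auto
  moreover have "\<forall>p\<in>?g ` G. \<forall>q\<in>?g ` G. \<exists>r\<in>?g ` G. le r p \<and> le r q"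
    using G unfolding filter_poset_def by blast
  moreover have "\<forall>i\<in>I. ?g ` G \<inter> E i \<noteq> {}"
  proof
    fix i assume "i \<in> I"
    obtain e where "e \<in> E i" "?f e \<in> G"
      using meets \<open>i \<in> I\<close> by blast
    have "e \<in> P"
      using \<open>e \<in> E i\<close> \<open>i \<in> I\<close> dense by blast
    then have "?g (?f e) = e"
      using assms(2) by simp
    with \<open>e \<in> E i\<close> \<open>?f e \<in> G\<close> show "?g ` G \<inter> E i \<noteq> {}"
      by (metis IntI empty_iff image_eqI)
  qed
  ultimately show ?thesis by blast
qed

definition selections :: "(nat \<Rightarrow> 'a set) \<Rightarrow> 'a set list set" where
  "selections D = {xs. \<forall>i<length xs. finite (xs ! i) \<and> xs ! i \<subseteq> D i}"

lemma countable_selections: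
  assumes "countable T" and "\<And>n. D n \<subseteq> T"
  shows "countable (selections D)"
proof (rule countable_subset)
  show "selections D \<subseteq> lists {A. finite A \<and> A \<subseteq> T}"
    using assms(2) by (fastforce simp: selections_def in_set_conv_nth)
  show "countable (lists {A. finite A \<and> A \<subseteq> T})"
    using assms(1) by (intro countable_lists countable_Collect_finite_subset)
qed

lemma snoc_singleton_in_selections:
  assumes "xs \<in> selections D" and "d \<in> D (length xs)"
  shows "xs @ [{d}] \<in> selections D"
  using assms by (auto simp: selections_def nth_append less_Suc_eq)

lemma nth_prefix: "prefix xs ys \<Longrightarrow> i < length xs \<Longrightarrow> ys ! i = xs ! i"
  by (auto simp: prefix_def nth_append)

lemma Union_nth_of_prefix_directed:
  assumes directed: "\<forall>p\<in>G. \<forall>q\<in>G. \<exists>r\<in>G. prefix p r \<and> prefix q r"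
    and "g \<in> G" and "n < length g"
  shows "\<Union>{h ! n | h. h \<in> G \<and> n < length h} = g ! n"
proof -
  have "h ! n = g ! n" if "h \<in> G" "n < length h" for h
  proof -
    obtain r where "prefix h r" "prefix g r"
      using directed \<open>g \<in> G\<close> \<open>h \<in> G\<close> by blast
    then show ?thesis
      using \<open>n < length g\<close> \<open>n < length h\<close> by (metis nth_prefix)
  qed
  then show ?thesis
    using assms(2,3) by blast
qed

lemma dense_in_iff_meets_open:
  "dense_in X D \<longleftrightarrow> D \<subseteq> topspace X \<and> (\<forall>U. openin X U \<and> U \<noteq> {} \<longrightarrow> D \<inter> U \<noteq> {})"
  by (simp add: dense_in_def dense_intersects_open)

lemma pi_base_member_inside:
  assumes "pi_base X B" and "openin X V" and "V \<noteq> {}"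
  obtains U where "U \<in> B" and "U \<subseteq> V"
  using assms unfolding pi_base_def by blast

lemma pi_base_member_openin:
  assumes "pi_base X B" and "U \<in> B"
  shows "openin X U" and "U \<noteq> {}"
  using assms unfolding pi_base_def by auto

lemma directed_selections_meeting_pi_base:
  assumes "countable (topspace X)" and "pi_base X B" and "MA_countable B"
    and dense: "\<And>n. dense_in X (D n)"
  obtains G where "G \<subseteq> selections D"
    and "\<forall>p\<in>G. \<forall>q\<in>G. \<exists>r\<in>G. prefix p r \<and> prefix q r"
    and "\<forall>U\<in>B. \<exists>g\<in>G. \<exists>i<length g. g ! i \<inter> U \<noteq> {}"
proof -
  define E where "E U = {xs \<in> selections D. \<exists>i<length xs. xs ! i \<inter> U \<noteq> {}}" for U
  have E_dense: "\<exists>ys\<in>E U. prefix xs ys" if "U \<in> B" and xs: "xs \<in> selections D" for U xs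
  proof -
    obtain d where "d \<in> D (length xs)" "d \<in> U"
      using dense pi_base_member_openin[OF \<open>pi_base X B\<close> \<open>U \<in> B\<close>]
      unfolding dense_in_iff_meets_open by blast
    then have "xs @ [{d}] \<in> E U"
      unfolding E_def using snoc_singleton_in_selections[OF xs] by force
    then show ?thesis
      by (blast intro: prefixI)
  qed
  have "countable (selections D)"
    using countable_selections[OF assms(1)] dense by (simp add: dense_in_def)
  moreover have "selections D \<noteq> {}"
    by (auto simp: selections_def intro!: exI[of _ "[]"])
  moreover have "\<forall>xs\<in>selections D. prefix xs xs"
    by simp
  moreover have "\<forall>xs\<in>selections D. \<forall>ys\<in>selections D. prefix ys xs \<and> prefix xs ys \<longrightarrow> xs = ys"
    by (blast intro: prefix_order.antisym)
  moreover have "\<forall>xs\<in>selections D. \<forall>ys\<in>selections D. \<forall>zs\<in>selections D.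
      prefix ys xs \<and> prefix zs ys \<longrightarrow> prefix zs xs"
    by (blast intro: prefix_order.trans)
  moreover have "\<forall>U\<in>B. E U \<subseteq> selections D \<and> (\<forall>xs\<in>selections D. \<exists>ys\<in>E U. prefix xs ys)"
    using E_dense by (auto simp: E_def)
  ultimately have "\<exists>G\<subseteq>selections D. G \<noteq> {} \<and> (\<forall>p\<in>G. \<forall>q\<in>G. \<exists>r\<in>G. prefix p r \<and> prefix q r)
      \<and> (\<forall>U\<in>B. G \<inter> E U \<noteq> {})"
    by (rule MA_countable_directed_meets_dense[OF assms(3), where le = "\<lambda>xs ys. prefix ys xs"])
  then obtain G where G_sel: "G \<subseteq> selections D"
    and directed: "\<forall>p\<in>G. \<forall>q\<in>G. \<exists>r\<in>G. prefix p r \<and> prefix q r"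
    and G_meets: "\<forall>U\<in>B. G \<inter> E U \<noteq> {}"
    by blast
  from G_meets have "\<forall>U\<in>B. \<exists>g\<in>G. \<exists>i<length g. g ! i \<inter> U \<noteq> {}"
    unfolding E_def by blast
  with G_sel directed show thesis
    by (rule that)
qed

lemma selectively_separable_if_pi_base_MA_countable:
  assumes "countable (topspace X)" and "pi_base X B" and "MA_countable B"
  shows "selectively_separable X"
  unfolding selectively_separable_def
proof (intro allI impI)
  fix D :: "nat \<Rightarrow> 'a set"
  assume dense: "\<forall>n. dense_in X (D n)"
  obtain G where G_sel: "G \<subseteq> selections D"
    and directed: "\<forall>p\<in>G. \<forall>q\<in>G. \<exists>r\<in>G. prefix p r \<and> prefix q r"
    and G_meets: "\<forall>U\<in>B. \<exists>g\<in>G. \<exists>i<length g. g ! i \<inter> U \<noteq> {}"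
    using directed_selections_meeting_pi_base[OF assms dense[rule_format]] .
  define F where "F n = \<Union>{g ! n | g. g \<in> G \<and> n < length g}" for n
  have F_fin_sub: "finite (F n) \<and> F n \<subseteq> D n" for n
  proof (cases "\<exists>g\<in>G. n < length g")
    case True
    then obtain g where "g \<in> G" "n < length g" by blast
    then have "F n = g ! n"
      unfolding F_def by (rule Union_nth_of_prefix_directed[OF directed])
    moreover have "g \<in> selections D"
      using \<open>g \<in> G\<close> G_sel by blast
    ultimately show ?thesis
      using \<open>n < length g\<close> by (simp add: selections_def)
  next
    case False
    then have "F n = {}"
      unfolding F_def by blast
    then show ?thesis by simp
  qed
  have "\<Union>(range F) \<inter> V \<noteq> {}" if V: "openin X V" "V \<noteq> {}" for V
  proof -
    obtain U where "U \<in> B" "U \<subseteq> V"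
      using pi_base_member_inside[OF \<open>pi_base X B\<close> V] .
    then obtain g i where "g \<in> G" "i < length g" "g ! i \<inter> U \<noteq> {}"
      using G_meets by blast
    moreover from \<open>g \<in> G\<close> \<open>i < length g\<close> have "g ! i \<subseteq> F i"
      unfolding F_def by blast
    ultimately show ?thesis
      using \<open>U \<subseteq> V\<close> by blast
  qed
  moreover have "\<Union>(range F) \<subseteq> topspace X"
  proof -
    have "D n \<subseteq> topspace X" for n
      using dense by (simp add: dense_in_def)
    then show ?thesis
      using F_fin_sub by blast
  qed
  ultimately show "\<exists>F. (\<forall>n. finite (F n) \<and> F n \<subseteq> D n) \<and> dense_in X (\<Union>n. F n)"
    unfolding dense_in_iff_meets_open using F_fin_sub by blast
qed

theorem mainTheorem7:
  fixes X :: "'a topology"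
  assumes "countable (topspace X)"
    and "crowded X"
    and "t1_space X"
    and "piweight_less_mc X"
  shows "selectively_separable X"
proof -
  obtain B where "pi_base X B" and "MA_countable B"
    using assms(4) unfolding piweight_less_mc_def card_less_mc_def by blast
  then show ?thesis
    using assms(1) selectively_separable_if_pi_base_MA_countable by blast
qed

end
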